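(* Let $G=(V,E)$ be a finite simple graph and $T\geq1$ an integer. For each zero forcing set $C$ that is the initial set of a zero forcing game in $\mathcal{Z}(G,T)$, there is a feasible solution $(x,y,z)$ of the Time Step Model $\mathrm{TSM}(G,T)$ such that $|C|=\sum_{v\in V}x^0_v$ and $\sum_{t\in[T]}z^t=\mathrm{pt}(G,C)\leq T$.
   Context: Zero forcing: $n=|V|$, $N(u)$ is the neighborhood of $u$, $d(u)=|N(u)|$. Under the standard color change rule, a filled vertex $u$ can force a non-filled vertex $v$ if $v$ is the only non-filled neighbor of $u$. A zero forcing game on $G$ with initial set $C\subseteq V$ consists of sets $C^{(0)}=C^{[0]}=C$, sets $C^{(t)}$ (vertices forced at step $t$) with $C^{[t]}=C^{[t-1]}\cup C^{(t)}$, and a collection $\phi(C)$ of forces $u\to v$, such that every vertex lies in exactly one $C^{(t)}$, and each $v\in C^{(t)}$, $t\geq1$, is forced by exactly one neighbor $u$ such that $u$ and all neighbors of $u$ other than $v$ lie in $C^{[t-1]}$. $C$ is a zero forcing set if repeated forcing eventually fills all of $V$. The propagation time $\mathrm{pt}(G,C)$ is the smallest $t^*$ with $C^{[t^*]}=V$ when at each step all possible forces are applied simultaneously, i.e. $C^{(t)}$ is the set of all $v\notin C^{[t-1]}$ for which some $u\in C^{[t-1]}$ has $v$ as its unique neighbor outside $C^{[t-1]}$ ($\mathrm{pt}(G,C)=\infty$ if $C$ is not a zero forcing set). Here $\mathcal{Z}(G,T)$ denotes the family of zero forcing games on $G$ whose initial set is a zero forcing set, which use at most $T$ time steps, and in which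 at each time step all possible forces are applied. Time Step Model: $A$ is the set of arcs containing $(u,v)$ and $(v,u)$ for each edge $\{u,v\}$, $[T]=\{1,\dots,T\}$. $\mathrm{TSM}(G,T)$ has binary variables $x^t_v$ ($v\in V$, $t\in\{0,\dots,T\}$), $y^t_a$ ($a\in A$, $t\in[T]$), $z^t$ ($t\in[T]$), with constraints: (1) $x^0_v+\sum_{t\in[T]}\sum_{a=(u,v)\in A}y^t_a=1$ for all $v$; (2) $y^t_a\leq x^{t-1}_u$ for all $a=(u,v)\in A$, $t\in[T]$; (3) $y^t_a\leq x^{t-1}_w$ for all $a=(u,v)\in A$, $w\in N(u)\setminus\{v\}$, $t\in[T]$; (4) $x^t_v=x^{t-1}_v+\sum_{a=(u,v)\in A}y^t_a$ for all $v$, $t\in[T]$; (5) $x^{t-1}_u-x^{t-1}_v+\sum_{w\in N(u)\setminus\{v\}}x^{t-1}_w\leq\sum_{a=(w,v)\in A}y^t_a+d(u)-1$ for all $(u,v)\in A$, $t\in[T]$; (6) $\frac1n\sum_{v\in V}(x^t_v-x^{t-1}_v)-z^t\leq0$ for all $t\in[T]$; (7) $z^t-\sum_{v\in V}(x^t_v-x^{t-1}_v)\leq 0$ for all $t\in[T]$. A feasible solution is one satisfying all constraints. *)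

theory Defs
  imports Complex_Main "HOL-Library.Extended_Nat"
begin

definition simple_graph :: "'a set \<Rightarrow> ('a \<Rightarrow> 'a \<Rightarrow> bool) \<Rightarrow> bool" where
  "simple_graph V E \<longleftrightarrow> finite V \<and> (\<forall>u v. E u v \<longrightarrow> E v u) \<and> (\<forall>u. \<not> E u u)
     \<and> (\<forall>u v. E u v \<longrightarrow> u \<in> V \<and> v \<in> V)"

definition nbh :: "'a set \<Rightarrow> ('a \<Rightarrow> 'a \<Rightarrow> bool) \<Rightarrow> 'a \<Rightarrow> 'a set" where
  "nbh V E u = {w \<in> V. E u w}"

definition deg :: "'a set \<Rightarrow> ('a \<Rightarrow> 'a \<Rightarrow> bool) \<Rightarrow> 'a \<Rightarrow> nat" where
  "deg V E u = card (nbh V E u)"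

definition arcs :: "'a set \<Rightarrow> ('a \<Rightarrow> 'a \<Rightarrow> bool) \<Rightarrow> ('a \<times> 'a) set" where
  "arcs V E = {(u, v). u \<in> V \<and> v \<in> V \<and> E u v}"

definition force_step :: "'a set \<Rightarrow> ('a \<Rightarrow> 'a \<Rightarrow> bool) \<Rightarrow> 'a set \<Rightarrow> 'a set" where
  "force_step V E S = S \<union> {v \<in> V - S. \<exists>u \<in> S. E u v \<and> (\<forall>w \<in> nbh V E u - {v}. w \<in> S)}"

definition filled :: "'a set \<Rightarrow> ('a \<Rightarrow> 'a \<Rightarrow> bool) \<Rightarrow> 'a set \<Rightarrow> nat \<Rightarrow> 'a set" where
  "filled V E C t = (force_step V E ^^ t) C"

definition zero_forcing_set :: "'a set \<Rightarrow> ('a \<Rightarrow> 'a \<Rightarrow> bool) \<Rightarrow> 'a set \<Rightarrow> bool" where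
  "zero_forcing_set V E C \<longleftrightarrow> C \<subseteq> V \<and> (\<exists>t. filled V E C t = V)"

definition prop_time :: "'a set \<Rightarrow> ('a \<Rightarrow> 'a \<Rightarrow> bool) \<Rightarrow> 'a set \<Rightarrow> enat" where
  "prop_time V E C =
     (if zero_forcing_set V E C then enat (LEAST t. filled V E C t = V) else \<infinity>)"

definition TSM_feasible ::
  "'a set \<Rightarrow> ('a \<Rightarrow> 'a \<Rightarrow> bool) \<Rightarrow> nat \<Rightarrow>
   ('a \<Rightarrow> nat \<Rightarrow> real) \<Rightarrow> ('a \<times> 'a \<Rightarrow> nat \<Rightarrow> real) \<Rightarrow> (nat \<Rightarrow> real) \<Rightarrow> bool" where
  "TSM_feasible V E T x y z \<longleftrightarrow>
     (\<forall>v \<in> V. \<forall>t \<in> {0..T}. x v t \<in> {0, 1}) \<and>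
     (\<forall>a \<in> arcs V E. \<forall>t \<in> {1..T}. y a t \<in> {0, 1}) \<and>
     (\<forall>t \<in> {1..T}. z t \<in> {0, 1}) \<and>
     \<comment> \<open>(1)\<close>
     (\<forall>v \<in> V. x v 0 + (\<Sum>t \<in> {1..T}. \<Sum>u \<in> {u. (u, v) \<in> arcs V E}. y (u, v) t) = 1) \<and>
     \<comment> \<open>(2)\<close>
     (\<forall>(u, v) \<in> arcs V E. \<forall>t \<in> {1..T}. y (u, v) t \<le> x u (t - 1)) \<and>
     \<comment> \<open>(3)\<close>
     (\<forall>(u, v) \<in> arcs V E. \<forall>w \<in> nbh V E u - {v}. \<forall>t \<in> {1..T}. y (u, v) t \<le> x w (t - 1)) \<and>
     \<comment> \<open>(4)\<close>
     (\<forall>v \<in> V. \<forall>t \<in> {1..T}.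
        x v t = x v (t - 1) + (\<Sum>u \<in> {u. (u, v) \<in> arcs V E}. y (u, v) t)) \<and>
     \<comment> \<open>(5)\<close>
     (\<forall>(u, v) \<in> arcs V E. \<forall>t \<in> {1..T}.
        x u (t - 1) - x v (t - 1) + (\<Sum>w \<in> nbh V E u - {v}. x w (t - 1))
          \<le> (\<Sum>w \<in> {w. (w, v) \<in> arcs V E}. y (w, v) t) + real (deg V E u) - 1) \<and>
     \<comment> \<open>(6)\<close>
     (\<forall>t \<in> {1..T}. (1 / real (card V)) * (\<Sum>v \<in> V. x v t - x v (t - 1)) - z t \<le> 0) \<and>
     \<comment> \<open>(7)\<close>
     (\<forall>t \<in> {1..T}. z t - (\<Sum>v \<in> V. x v t - x v (t - 1)) \<le> 0)"

end

theory Submission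
  imports Defs
begin

text \<open>Encode the game in which all possible forces are applied at every step by
indicators: \<open>x\<^sup>t\<^sub>v\<close> says that \<open>v\<close> is filled after \<open>t\<close> steps, \<open>y\<^sup>t\<^sub>u\<^sub>v\<close> that \<open>u\<close> is the
chosen forcer of \<open>v\<close> at step \<open>t\<close>, and \<open>z\<^sup>t\<close> that step \<open>t\<close> fills some vertex.
Constraint (4) holds because every newly filled vertex has exactly one chosen forcer,
and (1) follows from (4) by telescoping, since everything is filled after \<open>T\<close> steps.
Constraint (5) holds because all possible forces are applied, and (6), (7) because
\<open>z\<^sup>t\<close> indicates that the number of vertices filled at step \<open>t\<close>, which is at most \<open>n\<close>,
is nonzero. The steps filling some vertex are exactly \<open>1, \<dots>, pt(G, C)\<close>, so the
\<open>z\<^sup>t\<close> add up to the propagation time.\<close>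

lemma filled_0 [simp]: "filled V E C 0 = C"
  by (simp add: filled_def)

lemma filled_Suc [simp]: "filled V E C (Suc t) = force_step V E (filled V E C t)"
  by (simp add: filled_def)

lemma filled_mono: "t \<le> t' \<Longrightarrow> filled V E C t \<subseteq> filled V E C t'"
  by (rule monoD[OF mono_iff_le_Suc[THEN iffD2]]) (auto simp: force_step_def)

lemma filled_subset: "C \<subseteq> V \<Longrightarrow> filled V E C t \<subseteq> V"
  by (induction t) (auto simp: force_step_def)

lemma filled_stable:
  assumes "filled V E C (Suc t) = filled V E C t"
  shows "filled V E C (t + k) = filled V E C t"
  using assms by (induction k) simp_all

lemma filled_eq_V_iff:
  assumes "zero_forcing_set V E C" and "prop_time V E C = enat p"
  shows "filled V E C t = V \<longleftrightarrow> p \<le> t"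
proof -
  have C: "C \<subseteq> V" and p: "p = (LEAST t. filled V E C t = V)"
    using assms by (auto simp: zero_forcing_set_def prop_time_def)
  have "filled V E C p = V"
    unfolding p by (rule LeastI_ex) (use assms(1) in \<open>simp add: zero_forcing_set_def\<close>)
  then show ?thesis
    using filled_mono[of p t V E C] filled_subset[OF C] Least_le[of "\<lambda>t. filled V E C t = V"]
    unfolding p[symmetric] by blast
qed

definition can_force :: "'a set \<Rightarrow> ('a \<Rightarrow> 'a \<Rightarrow> bool) \<Rightarrow> 'a set \<Rightarrow> 'a \<Rightarrow> 'a \<Rightarrow> bool" where
  "can_force V E S u v \<longleftrightarrow> u \<in> S \<and> E u v \<and> (\<forall>w \<in> nbh V E u - {v}. w \<in> S)"

lemma force_step_eq: "force_step V E S = S \<union> {v \<in> V - S. \<exists>u. can_force V E S u v}"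
  by (auto simp: force_step_def can_force_def)

definition forcer :: "'a set \<Rightarrow> ('a \<Rightarrow> 'a \<Rightarrow> bool) \<Rightarrow> 'a set \<Rightarrow> 'a \<Rightarrow> 'a" where
  "forcer V E S v = (SOME u. can_force V E S u v)"

text \<open>The set \<open>C\<^sup>(\<^sup>t\<^sup>)\<close>; for \<open>t = 0\<close> it is empty, as \<open>0 - 1 = 0\<close> on \<^typ>\<open>nat\<close>.\<close>
definition forced_at :: "'a set \<Rightarrow> ('a \<Rightarrow> 'a \<Rightarrow> bool) \<Rightarrow> 'a set \<Rightarrow> nat \<Rightarrow> 'a set" where
  "forced_at V E C t = filled V E C t - filled V E C (t - 1)"

lemma forced_at_subset: "C \<subseteq> V \<Longrightarrow> forced_at V E C t \<subseteq> V"
  unfolding forced_at_def using filled_subset[of C V E t] by blast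

lemma can_force_forcer:
  assumes "1 \<le> t" and "v \<in> forced_at V E C t"
  shows "can_force V E (filled V E C (t - 1)) (forcer V E (filled V E C (t - 1)) v) v"
proof -
  obtain s where t: "t = Suc s"
    using assms(1) by (cases t) auto
  have "v \<in> force_step V E (filled V E C s) - filled V E C s"
    using assms(2) by (simp add: forced_at_def t)
  then have "\<exists>u. can_force V E (filled V E C s) u v"
    by (auto simp: force_step_eq)
  then show ?thesis
    unfolding forcer_def t diff_Suc_1 by (rule someI_ex)
qed

lemma forced_at_nonempty_iff:
  assumes "zero_forcing_set V E C" and "prop_time V E C = enat p" and "1 \<le> t"
  shows "forced_at V E C t \<noteq> {} \<longleftrightarrow> t \<le> p"
proof
  assume "forced_at V E C t \<noteq> {}"
  then have "filled V E C (t - 1) \<noteq> V"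
    using filled_subset[of C V E t] assms(1) by (auto simp: forced_at_def zero_forcing_set_def)
  then show "t \<le> p"
    using filled_eq_V_iff[OF assms(1,2)] by simp
next
  assume "t \<le> p"
  show "forced_at V E C t \<noteq> {}"
  proof
    assume "forced_at V E C t = {}"
    then have "filled V E C (Suc (t - 1)) = filled V E C (t - 1)"
      using filled_mono[of "t - 1" t V E C] assms(3) by (auto simp: forced_at_def)
    then have "filled V E C (t - 1 + (p - (t - 1))) = filled V E C (t - 1)"
      by (rule filled_stable)
    then have "filled V E C (t - 1) = V"
      using \<open>t \<le> p\<close> filled_eq_V_iff[OF assms(1,2), of p] by simp
    then show False
      using \<open>t \<le> p\<close> assms(3) filled_eq_V_iff[OF assms(1,2)] by simp
  qed
qed

definition game_x :: "'a set \<Rightarrow> ('a \<Rightarrow> 'a \<Rightarrow> bool) \<Rightarrow> 'a set \<Rightarrow> 'a \<Rightarrow> nat \<Rightarrow> real" where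
  "game_x V E C v t = of_bool (v \<in> filled V E C t)"

definition game_y :: "'a set \<Rightarrow> ('a \<Rightarrow> 'a \<Rightarrow> bool) \<Rightarrow> 'a set \<Rightarrow> 'a \<times> 'a \<Rightarrow> nat \<Rightarrow> real" where
  "game_y V E C a t =
     of_bool (snd a \<in> forced_at V E C t \<and> fst a = forcer V E (filled V E C (t - 1)) (snd a))"

definition game_z :: "'a set \<Rightarrow> ('a \<Rightarrow> 'a \<Rightarrow> bool) \<Rightarrow> 'a set \<Rightarrow> nat \<Rightarrow> real" where
  "game_z V E C t = of_bool (forced_at V E C t \<noteq> {})"

lemma game_x_diff_eq:
  "game_x V E C v t - game_x V E C v (t - 1) = of_bool (v \<in> forced_at V E C t)"
  using filled_mono[of "t - 1" t V E C] by (auto simp: game_x_def forced_at_def)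

lemma game_x_telescope:
  "game_x V E C v 0 + (\<Sum>t \<in> {1..T}. of_bool (v \<in> forced_at V E C t)) = game_x V E C v T"
proof -
  have "(\<Sum>t \<in> {Suc 0..T}. of_bool (v \<in> forced_at V E C t))
      = (\<Sum>t \<in> {Suc 0..T}. game_x V E C v t - game_x V E C v (t - 1))"
    by (simp only: game_x_diff_eq)
  also have "\<dots> = game_x V E C v T - game_x V E C v 0"
    by (rule sum_telescope'') simp
  finally show ?thesis
    by simp
qed

lemma sum_game_x_diff:
  assumes "finite V" and "C \<subseteq> V"
  shows "(\<Sum>v \<in> V. game_x V E C v t - game_x V E C v (t - 1)) = real (card (forced_at V E C t))"
proof -
  have "(\<Sum>v \<in> V. game_x V E C v t - game_x V E C v (t - 1))
      = (\<Sum>v \<in> V. of_bool (v \<in> forced_at V E C t))"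
    by (simp only: game_x_diff_eq)
  also have "\<dots> = real (card (forced_at V E C t))"
    using assms forced_at_subset[OF assms(2)] by (simp add: Int_absorb1)
  finally show ?thesis .
qed

lemma sum_game_y_incoming:
  assumes "simple_graph V E" and "1 \<le> t"
  shows "(\<Sum>u \<in> {u. (u, v) \<in> arcs V E}. game_y V E C (u, v) t) = of_bool (v \<in> forced_at V E C t)"
proof (cases "v \<in> forced_at V E C t")
  case True
  let ?f = "forcer V E (filled V E C (t - 1)) v"
  have "E ?f v"
    using can_force_forcer[OF assms(2) True] by (simp add: can_force_def)
  then have "(?f, v) \<in> arcs V E"
    using assms(1) by (simp add: arcs_def simple_graph_def)
  moreover have "finite {u. (u, v) \<in> arcs V E}"
    using assms(1) by (auto simp: arcs_def simple_graph_def intro: finite_subset)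
  ultimately have "(\<Sum>u \<in> {u. (u, v) \<in> arcs V E}. of_bool (u = ?f)) = (1 :: real)"
    by simp
  then show ?thesis
    using True by (simp add: game_y_def)
qed (simp add: game_y_def)

lemma game_color_change_rule:
  assumes "simple_graph V E" and "(u, v) \<in> arcs V E" and "1 \<le> t"
  shows "game_x V E C u (t - 1) - game_x V E C v (t - 1)
           + (\<Sum>w \<in> nbh V E u - {v}. game_x V E C w (t - 1))
         \<le> (\<Sum>w \<in> {w. (w, v) \<in> arcs V E}. game_y V E C (w, v) t) + real (deg V E u) - 1"
proof -
  define S where "S = filled V E C (t - 1)"
  define A where "A = nbh V E u - {v}"
  have fin: "finite (nbh V E u)"
    using assms(1) by (auto simp: nbh_def simple_graph_def)
  have v: "v \<in> nbh V E u"
    using assms(2) by (simp add: arcs_def nbh_def)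
  have "0 < card (nbh V E u)"
    using fin v by (auto simp: card_gt_0_iff)
  then have cardA: "real (card A) = real (deg V E u) - 1"
    using fin v by (simp add: A_def deg_def of_nat_diff Suc_leI)
  have sumA: "(\<Sum>w \<in> A. game_x V E C w (t - 1)) = real (card (A \<inter> S))"
    using fin by (simp add: A_def S_def game_x_def Int_def)
  have forced: "v \<in> forced_at V E C t" if "u \<in> S" "v \<notin> S" "A \<subseteq> S"
  proof -
    have "can_force V E S u v"
      using that assms(2) by (auto simp: can_force_def A_def arcs_def)
    then have "v \<in> force_step V E S"
      using assms(2) by (auto simp: force_step_eq arcs_def)
    moreover obtain s where "t = Suc s"
      using assms(3) by (cases t) auto
    ultimately show ?thesis
      using that by (simp add: S_def forced_at_def)
  qed
  have "of_bool (u \<in> S) - of_bool (v \<in> S) + real (card (A \<inter> S))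
      \<le> of_bool (v \<in> forced_at V E C t) + real (deg V E u) - 1"
  proof (cases "u \<in> S \<and> v \<notin> S \<and> A \<subseteq> S")
    case True
    then show ?thesis
      using forced cardA by (simp add: Int_absorb2)
  next
    case False
    then have "of_bool (u \<in> S) - of_bool (v \<in> S) \<le> (1 :: real) - of_bool (A \<subseteq> S)"
      by auto
    moreover have "card (A \<inter> S) \<le> card A"
      using fin by (intro card_mono) (auto simp: A_def)
    moreover have "card (A \<inter> S) < card A" if "\<not> A \<subseteq> S"
      using fin that by (intro psubset_card_mono) (auto simp: A_def)
    ultimately show ?thesis
      using cardA by (cases "A \<subseteq> S") simp_all
  qed
  moreover have "game_x V E C w (t - 1) = of_bool (w \<in> S)" for w
    by (simp add: game_x_def S_def)
  ultimately show ?thesis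
    unfolding A_def[symmetric] sumA sum_game_y_incoming[OF assms(1,3)] by simp
qed

lemma game_TSM_feasible:
  assumes "simple_graph V E" and "C \<subseteq> V" and "filled V E C T = V"
  shows "TSM_feasible V E T (game_x V E C) (game_y V E C) (game_z V E C)"
  unfolding TSM_feasible_def
proof (intro conjI)
  have fin: "finite V"
    using assms(1) by (simp add: simple_graph_def)
  show "\<forall>v \<in> V. \<forall>t \<in> {0..T}. game_x V E C v t \<in> {0, 1}"
    "\<forall>a \<in> arcs V E. \<forall>t \<in> {1..T}. game_y V E C a t \<in> {0, 1}"
    "\<forall>t \<in> {1..T}. game_z V E C t \<in> {0, 1}"
    by (simp_all add: game_x_def game_y_def game_z_def)
  show "\<forall>v \<in> V. game_x V E C v 0
          + (\<Sum>t \<in> {1..T}. \<Sum>u \<in> {u. (u, v) \<in> arcs V E}. game_y V E C (u, v) t) = 1"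
    using assms game_x_telescope[of V E C] by (simp add: sum_game_y_incoming game_x_def)
  show "\<forall>(u, v) \<in> arcs V E. \<forall>t \<in> {1..T}. game_y V E C (u, v) t \<le> game_x V E C u (t - 1)"
    "\<forall>(u, v) \<in> arcs V E. \<forall>w \<in> nbh V E u - {v}. \<forall>t \<in> {1..T}.
       game_y V E C (u, v) t \<le> game_x V E C w (t - 1)"
    using can_force_forcer[of _ v V E C for v]
    by (auto simp: game_y_def game_x_def can_force_def)
  show "\<forall>v \<in> V. \<forall>t \<in> {1..T}. game_x V E C v t
          = game_x V E C v (t - 1) + (\<Sum>u \<in> {u. (u, v) \<in> arcs V E}. game_y V E C (u, v) t)"
  proof (intro ballI)
    fix v t
    assume "t \<in> {1..T}"
    then show "game_x V E C v t
        = game_x V E C v (t - 1) + (\<Sum>u \<in> {u. (u, v) \<in> arcs V E}. game_y V E C (u, v) t)"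
      using game_x_diff_eq[of V E C v t] sum_game_y_incoming[OF assms(1)] by simp
  qed
  show "\<forall>(u, v) \<in> arcs V E. \<forall>t \<in> {1..T}.
          game_x V E C u (t - 1) - game_x V E C v (t - 1)
            + (\<Sum>w \<in> nbh V E u - {v}. game_x V E C w (t - 1))
          \<le> (\<Sum>w \<in> {w. (w, v) \<in> arcs V E}. game_y V E C (w, v) t) + real (deg V E u) - 1"
    using game_color_change_rule[OF assms(1)] by auto
  show "\<forall>t \<in> {1..T}. 1 / real (card V) * (\<Sum>v \<in> V. game_x V E C v t - game_x V E C v (t - 1))
          - game_z V E C t \<le> 0"
  proof
    fix t
    have "card (forced_at V E C t) \<le> card V"
      using card_mono[OF fin forced_at_subset[OF assms(2)]] .
    then show "1 / real (card V) * (\<Sum>v \<in> V. game_x V E C v t - game_x V E C v (t - 1))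
          - game_z V E C t \<le> 0"
      unfolding sum_game_x_diff[OF fin assms(2)] by (simp add: game_z_def field_split_simps)
  qed
  show "\<forall>t \<in> {1..T}. game_z V E C t - (\<Sum>v \<in> V. game_x V E C v t - game_x V E C v (t - 1)) \<le> 0"
    using finite_subset[OF forced_at_subset[OF assms(2)] fin]
    unfolding sum_game_x_diff[OF fin assms(2)] by (simp add: game_z_def Suc_le_eq card_gt_0_iff)
qed

lemma sum_game_z:
  assumes "zero_forcing_set V E C" and "prop_time V E C = enat p" and "p \<le> T"
  shows "(\<Sum>t \<in> {1..T}. game_z V E C t) = real p"
proof -
  have "(\<Sum>t \<in> {1..T}. game_z V E C t) = (\<Sum>t \<in> {1..T}. of_bool (t \<le> p))"
    using forced_at_nonempty_iff[OF assms(1,2)] by (intro sum.cong) (auto simp: game_z_def)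
  also have "\<dots> = real (card ({1..T} \<inter> {t. t \<le> p}))"
    by simp
  also have "{1..T} \<inter> {t. t \<le> p} = {1..p}"
    using assms(3) by auto
  finally show ?thesis
    by simp
qed

theorem theorem4p3:
  fixes V :: "'a set" and E :: "'a \<Rightarrow> 'a \<Rightarrow> bool" and T :: nat and C :: "'a set"
  assumes "simple_graph V E"
    and "T \<ge> 1"
    and "zero_forcing_set V E C"
    and "prop_time V E C \<le> enat T"
  shows "\<exists>x y z. TSM_feasible V E T x y z \<and>
           real (card C) = (\<Sum>v \<in> V. x v 0) \<and>
           (\<exists>k. prop_time V E C = enat k \<and> (\<Sum>t \<in> {1..T}. z t) = real k \<and> k \<le> T)"
proof -
  obtain p where p: "prop_time V E C = enat p"
    using assms(3) by (simp add: prop_time_def)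
  have "p \<le> T" and C: "C \<subseteq> V" and fin: "finite V"
    using assms(1,3,4) p by (auto simp: zero_forcing_set_def simple_graph_def)
  have "filled V E C T = V"
    using filled_eq_V_iff[OF assms(3) p] \<open>p \<le> T\<close> by simp
  moreover have "real (card C) = (\<Sum>v \<in> V. game_x V E C v 0)"
    using C fin by (simp add: game_x_def Int_absorb1)
  ultimately show ?thesis
    using game_TSM_feasible[OF assms(1) C] sum_game_z[OF assms(3) p \<open>p \<le> T\<close>] p \<open>p \<le> T\<close>
    by blast
qed

end
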